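(* With $T=\mathcal{P}_{\mathsf{ufs}}$, $FX=1+\mathbb{A}\times X+[\mathbb{A}]X$, $GX=2\times X^{\mathbb{A}}\times[\mathbb{A}]X$, let $(\mu F,\iota)=(\overline{\mathbb{A}}^*/{=_\alpha},\iota)$ be the initial $F$-algebra and $(\nu G,\tau)=(\mathcal{P}_{\mathsf{fs}}(\overline{\mathbb{A}}^*/{=_\alpha}),\tau)$ the terminal $G$-coalgebra. Let $e\colon\mathcal{P}_{\mathsf{ufs}}(\overline{\mathbb{A}}^*/{=_\alpha})\to\mathcal{P}_{\mathsf{fs}}(\overline{\mathbb{A}}^*/{=_\alpha})$ be the unique $G$-coalgebra homomorphism from $(\mathcal{P}_{\mathsf{ufs}}(\mu F),(\varepsilon_{\mu F}\cdot J\iota^{-1})^\sharp)$ to $(\nu G,\tau)$. Then $e$ is the inclusion map $\mathcal{P}_{\mathsf{ufs}}(\overline{\mathbb{A}}^*/{=_\alpha})\hookrightarrow\mathcal{P}_{\mathsf{fs}}(\overline{\mathbb{A}}^*/{=_\alpha})$.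
   Context: Fix a countably infinite set $\mathbb{A}$ of names; $\mathsf{Nom}$: nominal sets and equivariant maps; $1=\{*\}$, $2=\{0,1\}$; $[\mathbb{A}]X$ abstraction sets with classes $\langle a\rangle x$; $\mathcal{P}_{\mathsf{fs}}$, $\mathcal{P}_{\mathsf{ufs}}$ the finitely / uniformly finitely supported power sets, unit $\eta$ singleton, multiplication $\mu$ union. Bar strings: words over $\overline{\mathbb{A}}=\mathbb{A}\cup\{\mathord{|}a\}$; $=_\alpha$ the least equivalence with $x\,\mathord{|}a\,v=_\alpha x\,\mathord{|}b\,w$ whenever $\langle a\rangle v=\langle b\rangle w$; classes $[w]_\alpha$. $\iota( * )=[\varepsilon]_\alpha$, $\iota(a,[w]_\alpha)=[aw]_\alpha$, $\iota(\langle a\rangle[w]_\alpha)=[\mathord{|}a\,w]_\alpha$; $J\iota^{-1}=\eta\cdot\iota^{-1}$. $\tau(S)=(b,a\mapsto S_a,S_{\mathord{|}a})$ with $b=1$ iff $[\varepsilon]_\alpha\in S$, $S_a=\{[w]_\alpha:[aw]_\alpha\in S\}$, $S_{\mathord{|}a}=\langle a\rangle\{[w]_\alpha:[\mathord{|}a\,w]_\alpha\in S\}$ for $a$ fresh for $S$. $\varepsilon_X\colon\mathcal{P}_{\mathsf{ufs}}FX\to G\mathcal{P}_{\mathsf{ufs}}X$, $\varepsilon_X(S)=(b,a\mapsto\{s:(a,s)\in S\},\langle a\rangle\{s:\langle a\rangle s\in S\})$ with $b=1$ iff $*\in S$ and $a$ fresh for $S$. For an equivariant $g\colon X\to G\mathcal{P}_{\mathsf{ufs}}Y$,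 $g^\sharp\colon\mathcal{P}_{\mathsf{ufs}}X\to G\mathcal{P}_{\mathsf{ufs}}Y$ is its homomorphic extension w.r.t. the canonical $\mathcal{P}_{\mathsf{ufs}}$-algebra structure $G\mu_Y\cdot\rho_{\mathcal{P}_{\mathsf{ufs}}Y}$ on $G\mathcal{P}_{\mathsf{ufs}}Y$, i.e. $g^\sharp=G\mu_Y\cdot\rho_{\mathcal{P}_{\mathsf{ufs}}Y}\cdot\mathcal{P}_{\mathsf{ufs}}g$; concretely, for $U\in\mathcal{P}_{\mathsf{ufs}}X$ with $g(u)=(b_u,f_u,\langle a\rangle V_u)$ ($a$ fresh for $U$), $g^\sharp(U)=(\max_u b_u,\,a'\mapsto\bigcup_u f_u(a'),\,\langle a\rangle\bigcup_u V_u)$. Here $\rho_X(S)=(b,a\mapsto\{f(a):f\in p_1[S]\},\langle a\rangle\{s:\langle a\rangle s\in p_2[S]\})$ ($b=1$ iff $1\in p_0[S]$, $a$ fresh) is the distributive law of the canonical lifting of $G$. *)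

theory Defs
  imports Main
begin

text \<open>The countably infinite set of names A is modelled by nat. Nominal structure is given
  by the action of transpositions (swap a b); support and freshness are defined from it.\<close>

class swp =
  fixes sw :: "nat \<Rightarrow> nat \<Rightarrow> 'a \<Rightarrow> 'a"

instantiation nat :: swp begin
definition sw_nat_def: "sw a b (n::nat) = (if n = a then b else if n = b then a else n)"
instance ..
end

instantiation bool :: swp begin
definition sw_bool_def: "sw (a::nat) (b::nat) (x::bool) = x"
instance ..
end

instantiation unit :: swp begin
definition sw_unit_def: "sw (a::nat) (b::nat) (x::unit) = x"
instance ..
end

datatype bsym = Nm nat | Br nat   \<comment> \<open>a name a, or a bar name |a\<close>

instantiation bsym :: swp begin
definition sw_bsym_def:
  "sw a b s = (case s of Nm n \<Rightarrow> Nm (sw a b n) | Br n \<Rightarrow> Br (sw a b n))"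
instance ..
end

instantiation list :: (swp) swp begin
definition sw_list_def: "sw a b xs = map (sw a b) xs"
instance ..
end

instantiation set :: (swp) swp begin
definition sw_set_def: "sw a b X = sw a b ` X"
instance ..
end

instantiation prod :: (swp, swp) swp begin
definition sw_prod_def: "sw a b p = map_prod (sw a b) (sw a b) p"
instance ..
end

instantiation sum :: (swp, swp) swp begin
definition sw_sum_def: "sw a b p = map_sum (sw a b) (sw a b) p"
instance ..
end

instantiation "fun" :: (swp, swp) swp begin
definition sw_fun_def: "sw a b f = (\<lambda>x. sw a b (f (sw a b x)))"
instance ..
end

definition supp :: "'a::swp \<Rightarrow> nat set" where
  "supp x = {c. infinite {d. sw c d x \<noteq> x}}"

definition fresh :: "nat \<Rightarrow> 'a::swp \<Rightarrow> bool" where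
  "fresh c x \<longleftrightarrow> c \<notin> supp x"

text \<open>The abstraction <a>x is represented by its equivalence class
  {(b,y). (a,x) ~ (b,y)}, where (a,x) ~ (b,y) iff a = b and x = y, or b is fresh for x
  and (a b).x = y.\<close>

definition abstr :: "nat \<Rightarrow> 'a::swp \<Rightarrow> (nat \<times> 'a) set" where
  "abstr a x = {(b, y). (b = a \<and> y = x) \<or> (fresh b x \<and> y = sw a b x)}"

definition absmap :: "('a::swp \<Rightarrow> 'b::swp) \<Rightarrow> (nat \<times> 'a) set \<Rightarrow> (nat \<times> 'b) set" where
  "absmap f A = (case (SOME p. p \<in> A) of (a, x) \<Rightarrow> abstr a (f x))"

type_synonym word = "bsym list"
type_synonym cls = "word set"

definition alpha_step :: "word \<Rightarrow> word \<Rightarrow> bool" where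
  "alpha_step u v \<longleftrightarrow> (\<exists>x a b v' w'. u = x @ Br a # v' \<and> v = x @ Br b # w'
      \<and> abstr a v' = abstr b w')"

definition alpha :: "word \<Rightarrow> word \<Rightarrow> bool" where
  "alpha = (\<lambda>u v. alpha_step u v \<or> alpha_step v u)\<^sup>*\<^sup>*"

definition acls :: "word \<Rightarrow> cls" where
  "acls w = {v. alpha w v}"

definition muF :: "cls set" where
  "muF = range acls"

definition Pfs :: "cls set set" where
  "Pfs = {S. S \<subseteq> muF \<and> finite (supp S)}"

definition Pufs :: "cls set set" where
  "Pufs = {S. S \<subseteq> muF \<and> finite (\<Union> (supp ` S))}"

definition tau :: "cls set \<Rightarrow> bool \<times> (nat \<Rightarrow> cls set) \<times> (nat \<times> cls set) set" where
  "tau S = (acls [] \<in> S,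
            \<lambda>a. {acls w | w. acls (Nm a # w) \<in> S},
            (let c = (SOME c. fresh c S) in abstr c {acls w | w. acls (Br c # w) \<in> S}))"

text \<open>F X = 1 + A x X + [A]X is rendered as unit + (nat x X) + (nat x X) set.\<close>

definition iota :: "unit + (nat \<times> cls) + (nat \<times> cls) set \<Rightarrow> cls" where
  "iota z = (case z of
      Inl _ \<Rightarrow> acls []
    | Inr (Inl (a, c)) \<Rightarrow> acls (Nm a # (SOME w. w \<in> c))
    | Inr (Inr A) \<Rightarrow> (case (SOME p. p \<in> A) of (a, c) \<Rightarrow> acls (Br a # (SOME w. w \<in> c))))"

definition FmuF :: "(unit + (nat \<times> cls) + (nat \<times> cls) set) set" where
  "FmuF = {Inl ()} \<union> {Inr (Inl (a, c)) | a c. c \<in> muF} \<union> {Inr (Inr (abstr a c)) | a c. c \<in> muF}"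

definition iota_inv :: "cls \<Rightarrow> unit + (nat \<times> cls) + (nat \<times> cls) set" where
  "iota_inv = inv_into FmuF iota"

definition eps :: "(unit + (nat \<times> 'x::swp) + (nat \<times> 'x) set) set
      \<Rightarrow> bool \<times> (nat \<Rightarrow> 'x set) \<times> (nat \<times> 'x set) set" where
  "eps S = (Inl () \<in> S,
            \<lambda>a. {s. Inr (Inl (a, s)) \<in> S},
            (let c = (SOME c. fresh c S) in abstr c {s. Inr (Inr (abstr c s)) \<in> S}))"

definition rho :: "(bool \<times> (nat \<Rightarrow> 'x::swp) \<times> (nat \<times> 'x) set) set
      \<Rightarrow> bool \<times> (nat \<Rightarrow> 'x set) \<times> (nat \<times> 'x set) set" where
  "rho S = (True \<in> fst ` S,
            \<lambda>a. {f a | f. f \<in> (fst \<circ> snd) ` S},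
            (let c = (SOME c. fresh c S) in abstr c {s. abstr c s \<in> (snd \<circ> snd) ` S}))"

definition Gmu :: "bool \<times> (nat \<Rightarrow> 'y::swp set set) \<times> (nat \<times> 'y set set) set
      \<Rightarrow> bool \<times> (nat \<Rightarrow> 'y set) \<times> (nat \<times> 'y set) set" where
  "Gmu t = (case t of (b, f, A) \<Rightarrow> (b, \<lambda>a. \<Union> (f a), absmap Union A))"

definition sharp :: "('x \<Rightarrow> bool \<times> (nat \<Rightarrow> 'y::swp set) \<times> (nat \<times> 'y set) set)
      \<Rightarrow> 'x set \<Rightarrow> bool \<times> (nat \<Rightarrow> 'y set) \<times> (nat \<times> 'y set) set" where
  "sharp g U = Gmu (rho (g ` U))"

text \<open>The coalgebra (eps_{mu F} . J iota^{-1})# on P_ufs(mu F), with J iota^{-1} = eta . iota^{-1}.\<close>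
definition coalg :: "cls set \<Rightarrow> bool \<times> (nat \<Rightarrow> cls set) \<times> (nat \<times> cls set) set" where
  "coalg = sharp (\<lambda>u. eps {iota_inv u})"

definition Gmap :: "('a::swp \<Rightarrow> 'b::swp) \<Rightarrow> bool \<times> (nat \<Rightarrow> 'a) \<times> (nat \<times> 'a) set
      \<Rightarrow> bool \<times> (nat \<Rightarrow> 'b) \<times> (nat \<times> 'b) set" where
  "Gmap h t = (case t of (b, f, A) \<Rightarrow> (b, h \<circ> f, absmap h A))"

definition is_hom :: "(cls set \<Rightarrow> cls set) \<Rightarrow> bool" where
  "is_hom e \<longleftrightarrow> (\<forall>S\<in>Pufs. e S \<in> Pfs)
     \<and> (\<forall>a b. \<forall>S\<in>Pufs. e (sw a b S) = sw a b (e S))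
     \<and> (\<forall>S\<in>Pufs. tau (e S) = Gmap e (coalg S))"

end

(*
  Alpha-equivalence of bar strings is decided by a de Bruijn representation, which makes
  the three constructors of mu F injective on alpha-classes; in particular the class of
  |a w determines the abstraction <a>[w].  For a uniformly finitely supported set S of
  classes, the coalgebra (eps . J iota^-1)# then computes exactly tau S: whether S contains
  the empty string, the derivative of S by each name a, and the abstraction <c> of its
  derivative by |c for c fresh for S.  Hence the inclusion is a homomorphism.  Conversely,
  a homomorphism e is equivariant, so every name fresh for S is fresh for e S, and e commutes
  with all three derivatives.  Induction on the length of a bar string, renaming a leading
  bar to a fresh name, shows that e S and S contain the same classes.
*)

theory Submission
  imports Defs "HOL-Combinatorics.Transposition"
begin

section \<open>Swapping actions\<close>

lemma sw_nat_transpose [simp]: "sw a b (n::nat) = transpose a b n"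
  by (simp add: sw_nat_def transpose_def)

class swap_action = swp +
  assumes sw_same [simp]: "sw a a x = x"
    and sw_sw [simp]: "sw a b (sw a b x) = x"
    and sw_commute: "sw a b x = sw b a x"
    and sw_conj: "sw a b (sw c d x) = sw (transpose a b c) (transpose a b d) (sw a b x)"

lemma transpose_conj:
  "transpose a b (transpose c d n) = transpose (transpose a b c) (transpose a b d) (transpose a b n)"
  by (auto simp: transpose_def)

instance nat :: swap_action
  by standard (simp_all add: transpose_commute, rule transpose_conj)

lemma sw_bool [simp]: "sw a b (x::bool) = x"
  by (simp add: sw_bool_def)

instance bool :: swap_action by standard simp_all

instance unit :: swap_action by standard (simp_all add: sw_unit_def)

lemma sw_bsym_simps [simp]: "sw a b (Nm n) = Nm (transpose a b n)" "sw a b (Br n) = Br (transpose a b n)"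
  by (simp_all add: sw_bsym_def)

instance bsym :: swap_action
proof
  fix a b c d :: nat and x :: bsym
  show "sw a a x = x" "sw a b (sw a b x) = x" "sw a b x = sw b a x"
    "sw a b (sw c d x) = sw (transpose a b c) (transpose a b d) (sw a b x)"
    by (cases x; simp add: transpose_commute transpose_conj[of a b c d])+
qed

lemma sw_list_simps [simp]:
  "sw a b [] = []" "sw a b (x # xs) = sw a b x # sw a b xs" "sw a b (xs @ ys) = sw a b xs @ sw a b ys"
  "length (sw a b xs) = length xs"
  by (simp_all add: sw_list_def)

instance list :: (swap_action) swap_action
proof
  fix a b c d :: nat and xs :: "'a list"
  show "sw a a xs = xs" "sw a b (sw a b xs) = xs" by (induct xs) simp_all
  show "sw a b xs = sw b a xs" by (simp add: sw_list_def sw_commute[of a b])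
  show "sw a b (sw c d xs) = sw (transpose a b c) (transpose a b d) (sw a b xs)"
    by (induct xs) (simp_all add: sw_conj[of a b c d])
qed

lemma mem_sw_set_iff: "x \<in> sw a b (X::'a::swap_action set) \<longleftrightarrow> sw a b x \<in> X"
  by (force simp: sw_set_def)

instance set :: (swap_action) swap_action
proof
  fix a b c d :: nat and X :: "'a set"
  show "sw a a X = X" "sw a b (sw a b X) = X" by (simp_all add: sw_set_def image_image)
  show "sw a b X = sw b a X" by (simp add: sw_set_def sw_commute[of a b])
  show "sw a b (sw c d X) = sw (transpose a b c) (transpose a b d) (sw a b X)"
    by (simp add: sw_set_def image_image sw_conj[of a b c d])
qed

lemma sw_pair [simp]: "sw a b (x, y) = (sw a b x, sw a b y)"
  by (simp add: sw_prod_def)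

instance prod :: (swap_action, swap_action) swap_action
proof
  fix a b c d :: nat and x :: "'a \<times> 'b"
  show "sw a a x = x" "sw a b (sw a b x) = x" by (cases x; simp)+
  show "sw a b x = sw b a x" by (cases x) (simp add: sw_commute[of a b])
  show "sw a b (sw c d x) = sw (transpose a b c) (transpose a b d) (sw a b x)"
    by (cases x) (simp add: sw_conj[of a b c d])
qed

instance sum :: (swap_action, swap_action) swap_action
proof
  fix a b c d :: nat and x :: "'a + 'b"
  show "sw a a x = x" "sw a b (sw a b x) = x" by (cases x; simp add: sw_sum_def)+
  show "sw a b x = sw b a x" by (cases x) (simp_all add: sw_sum_def sw_commute[of a b])
  show "sw a b (sw c d x) = sw (transpose a b c) (transpose a b d) (sw a b x)"
    by (cases x) (simp_all add: sw_sum_def sw_conj[of a b c d])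
qed

lemma sw_conj': "sw c d (sw a b (x::'a::swap_action)) = sw a b (sw (transpose a b c) (transpose a b d) x)"
  using sw_conj[of a b "transpose a b c" "transpose a b d" x] by simp

lemma sw_fun_conj:
  "sw a b (sw c d (f::'a::swap_action \<Rightarrow> 'b::swap_action)) = sw (transpose a b c) (transpose a b d) (sw a b f)"
proof
  fix x :: 'a
  have "sw c d (sw a b x) = sw a b (sw (transpose a b c) (transpose a b d) x)"
    by (rule sw_conj')
  then show "sw a b (sw c d f) x = sw (transpose a b c) (transpose a b d) (sw a b f) x"
    by (simp add: sw_fun_def sw_conj[of a b c d])
qed

instance "fun" :: (swap_action, swap_action) swap_action
proof
  fix a b c d :: nat and f :: "'a \<Rightarrow> 'b"
  show "sw a a f = f" "sw a b (sw a b f) = f" by (simp_all add: sw_fun_def)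
  show "sw a b f = sw b a f" by (simp add: sw_fun_def sw_commute[of a b])
  show "sw a b (sw c d f) = sw (transpose a b c) (transpose a b d) (sw a b f)"
    by (rule sw_fun_conj)
qed


section \<open>Support and freshness\<close>

lemma supp_sw: "c \<in> supp (sw a b (x::'a::swap_action)) \<longleftrightarrow> transpose a b c \<in> supp x"
proof -
  have "{d. sw c d (sw a b x) \<noteq> sw a b x} = transpose a b ` {d. sw (transpose a b c) d x \<noteq> x}"
  proof (rule set_eqI)
    fix d
    have "sw c d (sw a b x) = sw a b (sw (transpose a b c) (transpose a b d) x)"
      by (rule sw_conj')
    then have "sw c d (sw a b x) \<noteq> sw a b x \<longleftrightarrow> sw (transpose a b c) (transpose a b d) x \<noteq> x"
      by (metis sw_sw)
    then show "d \<in> {d. sw c d (sw a b x) \<noteq> sw a b x} \<longleftrightarrow> d \<in> transpose a b ` {d. sw (transpose a b c) d x \<noteq> x}"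
      by (auto simp: image_iff)
  qed
  then show ?thesis
    by (simp add: supp_def finite_image_iff inj_on_transpose)
qed

lemma fresh_sw: "fresh c (sw a b (x::'a::swap_action)) \<longleftrightarrow> fresh (transpose a b c) x"
  by (simp add: fresh_def supp_sw)

lemma ex_not_in_finite: "finite (A::nat set) \<Longrightarrow> \<exists>c. c \<notin> A"
  using ex_new_if_finite[OF infinite_UNIV_nat] by blast

lemma fresh_SOME: "finite (supp x) \<Longrightarrow> fresh (SOME c. fresh c x) x"
  by (metis ex_not_in_finite fresh_def someI_ex)

lemma sw_fresh_fresh:
  assumes "fresh c (x::'a::swap_action)" "fresh d x"
  shows "sw c d x = x"
proof (cases "c = d")
  case False
  have "finite {e. sw c e x \<noteq> x}" "finite {e. sw d e x \<noteq> x}"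
    using assms by (simp_all add: fresh_def supp_def)
  then have "finite ({e. sw c e x \<noteq> x} \<union> {e. sw d e x \<noteq> x} \<union> {c, d})"
    by simp
  from ex_not_in_finite[OF this]
  obtain e where "e \<notin> {e. sw c e x \<noteq> x} \<union> {e. sw d e x \<noteq> x} \<union> {c, d}" ..
  then have ce: "sw c e x = x" and de: "sw d e x = x" and "e \<noteq> c" "e \<noteq> d" by auto
  \<comment> \<open>the transposition (c d) factors as (c e)(d e)(c e)\<close>
  have "sw c e (sw d e (sw c e x)) = sw d c x"
    using sw_conj[of c e d e "sw c e x"] False \<open>e \<noteq> c\<close> \<open>e \<noteq> d\<close> by simp
  then show ?thesis using ce de by (simp add: sw_commute)
qed simp

lemma supp_subset_if_fixes:
  assumes "\<And>c d. sw c d (x::'a::swap_action) = x \<Longrightarrow> sw c d (y::'b::swap_action) = y"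
  shows "supp y \<subseteq> supp x"
proof
  fix c assume "c \<in> supp y"
  moreover have "{d. sw c d y \<noteq> y} \<subseteq> {d. sw c d x \<noteq> x}" using assms by blast
  ultimately show "c \<in> supp x" by (auto simp: supp_def dest: finite_subset)
qed

lemma supp_subset_Un_if_fixes:
  assumes "\<And>c d. sw c d (x1::'a::swap_action) = x1 \<Longrightarrow> sw c d (x2::'b::swap_action) = x2
      \<Longrightarrow> sw c d (y::'c::swap_action) = y"
  shows "supp y \<subseteq> supp x1 \<union> supp x2"
proof
  fix c assume "c \<in> supp y"
  moreover have "{d. sw c d y \<noteq> y} \<subseteq> {d. sw c d x1 \<noteq> x1} \<union> {d. sw c d x2 \<noteq> x2}"
    using assms by blast
  ultimately show "c \<in> supp x1 \<union> supp x2" by (auto simp: supp_def dest: finite_subset)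
qed

lemma supp_nat: "supp (n::nat) \<subseteq> {n}"
proof
  fix c assume "c \<in> supp n"
  moreover have "c \<noteq> n \<Longrightarrow> {d. sw c d n \<noteq> n} \<subseteq> {n}" by (auto simp: transpose_def)
  ultimately show "c \<in> {n}" by (auto simp: supp_def dest: finite_subset)
qed

lemma supp_set_subset_Union:
  assumes "finite (\<Union>(supp ` (X::'a::swap_action set)))"
  shows "supp X \<subseteq> \<Union>(supp ` X)"
proof
  fix c assume c: "c \<in> supp X"
  show "c \<in> \<Union>(supp ` X)"
  proof (rule ccontr)
    assume "c \<notin> \<Union>(supp ` X)"
    then have "d \<notin> \<Union>(supp ` X) \<Longrightarrow> sw c d X = X" for d
      by (auto simp: sw_set_def fresh_def sw_fresh_fresh image_iff)
    then have "{d. sw c d X \<noteq> X} \<subseteq> \<Union>(supp ` X)" by blast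
    then show False using c assms by (auto simp: supp_def dest: finite_subset)
  qed
qed

lemma sw_singleton [simp]: "sw a b {x::'a::swap_action} = {sw a b x}"
  by (simp add: sw_set_def)

lemma sw_empty [simp]: "sw a b ({}::'a::swap_action set) = {}"
  by (simp add: sw_set_def)

lemma supp_singleton [simp]: "supp {x::'a::swap_action} = supp x"
  by (simp add: supp_def)

lemma supp_empty [simp]: "supp ({}::'a::swap_action set) = {}"
  by (simp add: supp_def)


section \<open>Abstractions\<close>

lemma abstr_mem_iff: "(b, y) \<in> abstr a x \<longleftrightarrow> (b = a \<and> y = x) \<or> (fresh b x \<and> y = sw a b x)"
  by (simp add: abstr_def)

lemma abstr_mem_self: "(a, x) \<in> abstr a x"
  by (simp add: abstr_def)

lemma abstr_rename:
  assumes "fresh b (x::'a::swap_action)"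
  shows "abstr b (sw a b x) = abstr a x"
proof -
  have "(e = b \<and> z = sw a b x \<or> fresh e (sw a b x) \<and> z = sw b e (sw a b x))
      \<longleftrightarrow> (e = a \<and> z = x \<or> fresh e x \<and> z = sw a e x)" for e z
  proof (cases "e = a \<or> e = b \<or> a = b")
    case True then show ?thesis using assms by (auto simp: fresh_sw sw_commute[of b a])
  next
    case False
    then have "fresh e (sw a b x) \<longleftrightarrow> fresh e x" by (simp add: fresh_sw)
    moreover have "fresh e x \<Longrightarrow> sw b e (sw a b x) = sw a e x"
      using sw_conj[of b e a b x] sw_fresh_fresh[OF assms, of e] False by simp
    ultimately show ?thesis using False by auto
  qed
  then show ?thesis by (auto simp: abstr_def)
qed

lemma abstr_eq_iff:
  "abstr a (x::'a::swap_action) = abstr b y \<longleftrightarrow> (a = b \<and> x = y) \<or> (a \<noteq> b \<and> fresh b x \<and> y = sw a b x)"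
proof
  assume "abstr a x = abstr b y"
  then have "(b, y) \<in> abstr a x" by (simp add: abstr_mem_self)
  then show "(a = b \<and> x = y) \<or> (a \<noteq> b \<and> fresh b x \<and> y = sw a b x)"
    by (auto simp: abstr_mem_iff)
qed (auto simp: abstr_rename)

lemma abstr_mem_abstr: "(b, y) \<in> abstr a (x::'a::swap_action) \<Longrightarrow> abstr b y = abstr a x"
  by (auto simp: abstr_mem_iff abstr_rename)

lemma abstr_inj: "abstr a (x::'a::swap_action) = abstr a y \<Longrightarrow> x = y"
  by (simp add: abstr_eq_iff)

lemma abstr_singleton_eq_iff:
  "abstr a {x::'a::swap_action} = abstr b {y} \<longleftrightarrow> abstr a x = abstr b y"
  by (simp add: abstr_eq_iff fresh_def)

lemma abstr_empty: "abstr a ({}::'a::swap_action set) = abstr b {}"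
  by (simp add: abstr_eq_iff fresh_def)

lemma sw_abstr: "sw c d (abstr a (x::'a::swap_action)) = abstr (transpose c d a) (sw c d x)"
proof -
  have "sw c d y = sw a (transpose c d b) x \<longleftrightarrow> y = sw (transpose c d a) b (sw c d x)" for b y
    using sw_conj[of c d a "transpose c d b" x] by (metis sw_sw transpose_involutory)
  then show ?thesis
    by (auto simp: set_eq_iff mem_sw_set_iff abstr_mem_iff fresh_sw)
qed

lemma sw_abstr_empty [simp]: "sw a b (abstr c ({}::'a::swap_action set)) = abstr c {}"
  by (simp add: sw_abstr abstr_empty)

lemma supp_abstr: "supp (abstr a (x::'a::swap_action)) \<subseteq> insert a (supp x)"
proof -
  have "supp (abstr a x) \<subseteq> supp a \<union> supp x"
    by (rule supp_subset_Un_if_fixes) (simp add: sw_abstr)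
  then show ?thesis using supp_nat[of a] by auto
qed

lemma fresh_abstr:
  assumes "fresh c (abstr a (x::'a::swap_action))"
  shows "c = a \<or> fresh c x"
proof (rule ccontr)
  assume "\<not> (c = a \<or> fresh c x)"
  then have "c \<noteq> a" and "infinite ({d. sw c d x \<noteq> x} - {a})"
    by (simp_all add: fresh_def supp_def)
  moreover have "{d. sw c d x \<noteq> x} - {a} \<subseteq> {d. sw c d (abstr a x) \<noteq> abstr a x}"
  proof
    fix d assume d: "d \<in> {d. sw c d x \<noteq> x} - {a}"
    then have "sw c d (abstr a x) = abstr a (sw c d x)"
      using \<open>c \<noteq> a\<close> by (simp add: sw_abstr)
    moreover have "abstr a (sw c d x) \<noteq> abstr a x"
      using d abstr_inj by blast
    ultimately show "d \<in> {d. sw c d (abstr a x) \<noteq> abstr a x}"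
      by simp
  qed
  ultimately have "c \<in> supp (abstr a x)" by (auto simp: supp_def dest: finite_subset)
  then show False using assms by (simp add: fresh_def)
qed

lemma absmap_abstr:
  assumes eqvt: "\<And>a b. f (sw a b x) = sw a b (f x)"
  shows "absmap (f::'a::swap_action \<Rightarrow> 'b::swap_action) (abstr c x) = abstr c (f x)"
proof -
  obtain a y where p: "(SOME p. p \<in> abstr c x) = (a, y)" by (rule prod.exhaust)
  have "(SOME p. p \<in> abstr c x) \<in> abstr c x" by (rule someI, rule abstr_mem_self)
  then have "(a, y) \<in> abstr c x" by (simp only: p)
  then consider "a = c" "y = x" | "fresh a x" "y = sw c a x"
    by (auto simp: abstr_mem_iff)
  then have "abstr a (f y) = abstr c (f x)"
  proof cases
    case 2
    have "supp (f x) \<subseteq> supp x"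
      by (rule supp_subset_if_fixes) (metis eqvt)
    then have "fresh a (f x)" using \<open>fresh a x\<close> by (auto simp: fresh_def)
    then show ?thesis using 2 by (simp add: eqvt abstr_rename)
  qed simp
  then show ?thesis by (simp add: absmap_def p)
qed


section \<open>Bar strings\<close>

fun bsym_name :: "bsym \<Rightarrow> nat" where
  "bsym_name (Nm n) = n"
| "bsym_name (Br n) = n"

definition names :: "word \<Rightarrow> nat set" where
  "names w = bsym_name ` set w"

lemma names_simps [simp]:
  "names [] = {}" "names (Nm n # w) = insert n (names w)" "names (Br n # w) = insert n (names w)"
  "names (u @ w) = names u \<union> names w"
  by (auto simp: names_def)

lemma finite_names [simp]: "finite (names w)"
  by (simp add: names_def)

lemma names_sw: "names (sw a b w) = transpose a b ` names w"
proof (induct w)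
  case (Cons s w) then show ?case by (cases s) auto
qed simp

lemma sw_word_eq_self: "a \<notin> names w \<Longrightarrow> b \<notin> names w \<Longrightarrow> sw a b w = w"
proof (induct w)
  case (Cons s w) then show ?case by (cases s) auto
qed simp

lemma supp_word: "supp (w::word) = names w"
proof
  show "supp w \<subseteq> names w"
  proof
    fix c assume "c \<in> supp w"
    moreover have "c \<notin> names w \<Longrightarrow> {d. sw c d w \<noteq> w} \<subseteq> names w"
      using sw_word_eq_self by blast
    ultimately show "c \<in> names w"
      unfolding supp_def using finite_subset finite_names by blast
  qed
  show "names w \<subseteq> supp w"
  proof
    fix c assume c: "c \<in> names w"
    have "sw c d w \<noteq> w" if "d \<notin> names w" for d
    proof
      assume "sw c d w = w"
      moreover have "d \<in> names (sw c d w)"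
        using c by (metis image_eqI names_sw transpose_apply_first)
      ultimately show False using that by simp
    qed
    then have "- names w \<subseteq> {d. sw c d w \<noteq> w}" by blast
    moreover have "infinite (- names w)"
      using finite_names infinite_UNIV_nat by (metis finite_compl)
    ultimately show "c \<in> supp w" by (auto simp: supp_def dest: finite_subset)
  qed
qed

lemma fresh_word: "fresh c (w::word) \<longleftrightarrow> c \<notin> names w"
  by (simp add: fresh_def supp_word)


section \<open>De Bruijn representation\<close>

text \<open>The environment lists the enclosing binders, innermost first. The de Bruijn form is a
  complete invariant of alpha-equivalence, see \<open>alpha_iff_debruijn\<close>.\<close>

fun index_of :: "nat list \<Rightarrow> nat \<Rightarrow> nat option" where
  "index_of [] y = None"
| "index_of (z # E) y = (if y = z then Some 0 else map_option Suc (index_of E y))"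

lemma index_of_eq_None_iff: "index_of E y = None \<longleftrightarrow> y \<notin> set E"
  by (induct E) auto

lemma index_of_inj: "index_of E y = Some i \<Longrightarrow> index_of E y' = Some i \<Longrightarrow> y = y'"
  by (induct E arbitrary: i) (auto split: if_splits)

lemma index_of_transpose: "index_of (map (transpose a b) E) (transpose a b y) = index_of E y"
  by (induct E) (auto simp: transpose_eq_iff)

datatype dbsym = DFree nat | DBound nat | DBinder

definition db_name :: "nat list \<Rightarrow> nat \<Rightarrow> dbsym" where
  "db_name E y = (case index_of E y of Some i \<Rightarrow> DBound i | None \<Rightarrow> DFree y)"

fun debruijn :: "nat list \<Rightarrow> word \<Rightarrow> dbsym list" where
  "debruijn E [] = []"
| "debruijn E (Nm y # w) = db_name E y # debruijn E w"
| "debruijn E (Br z # w) = DBinder # debruijn (z # E) w"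

fun binders :: "nat list \<Rightarrow> word \<Rightarrow> nat list" where
  "binders E [] = E"
| "binders E (Nm y # w) = binders E w"
| "binders E (Br z # w) = binders (z # E) w"

lemma debruijn_append: "debruijn E (u @ w) = debruijn E u @ debruijn (binders E u) w"
  by (induct E u rule: binders.induct) simp_all

lemma binders_append: "binders E (u @ w) = binders (binders E u) w"
  by (induct E u rule: binders.induct) simp_all

lemma length_debruijn [simp]: "length (debruijn E w) = length w"
  by (induct E w rule: debruijn.induct) simp_all

lemma DFree_eq_db_name_iff: "DFree x = db_name E y \<longleftrightarrow> x = y \<and> y \<notin> set E"
  using index_of_eq_None_iff[of E y] by (cases "index_of E y") (auto simp: db_name_def)

lemma db_name_neq_DBinder [simp]: "db_name E y \<noteq> DBinder" "DBinder \<noteq> db_name E y"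
  by (auto simp: db_name_def split: option.splits)

lemma db_name_inj: "db_name E y = db_name E y' \<Longrightarrow> y = y'"
  by (auto simp: db_name_def split: option.splits dest: index_of_inj)

definition sw_db :: "nat \<Rightarrow> nat \<Rightarrow> dbsym \<Rightarrow> dbsym" where
  "sw_db a b s = (case s of DFree y \<Rightarrow> DFree (transpose a b y) | _ \<Rightarrow> s)"

lemma sw_db_sw_db [simp]: "sw_db a b (sw_db a b s) = s"
  by (cases s) (simp_all add: sw_db_def)

lemma map_sw_db_eq_iff: "map (sw_db a b) xs = ys \<longleftrightarrow> xs = map (sw_db a b) ys"
  by (auto simp: comp_def)

lemma debruijn_sw: "debruijn (map (transpose a b) E) (sw a b w) = map (sw_db a b) (debruijn E w)"
proof (induct E w rule: debruijn.induct)
  case (2 E y w) then show ?case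
    by (auto simp: db_name_def sw_db_def index_of_transpose split: option.splits)
qed (simp_all add: sw_db_def)

lemma DFree_in_debruijn: "DFree y \<in> set (debruijn E w) \<Longrightarrow> y \<in> names w \<and> y \<notin> set E"
  by (induct E w rule: debruijn.induct) (auto simp: DFree_eq_db_name_iff)

lemma DFree_in_debruijn_cong:
  "(y \<in> set E1 \<longleftrightarrow> y \<in> set E2) \<Longrightarrow> DFree y \<in> set (debruijn E1 w) \<longleftrightarrow> DFree y \<in> set (debruijn E2 w)"
proof (induct w arbitrary: E1 E2)
  case (Cons s w)
  show ?case
  proof (cases s)
    case (Nm x)
    have "DFree y = db_name E1 x \<longleftrightarrow> DFree y = db_name E2 x"
      using Cons.prems by (auto simp: DFree_eq_db_name_iff)
    then show ?thesis using Cons.hyps[OF Cons.prems] Nm by simp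
  next
    case (Br z)
    then show ?thesis using Cons.hyps[of "z # E1" "z # E2"] Cons.prems by simp
  qed
qed simp

lemma debruijn_rename_env:
  assumes "\<forall>y\<in>names w. index_of E y = index_of E' (transpose a b y)"
    and "\<forall>y. DFree y \<in> set (debruijn E w) \<longrightarrow> transpose a b y = y"
  shows "debruijn E w = debruijn E' (sw a b w)"
  using assms
proof (induct w arbitrary: E E')
  case (Cons s w)
  show ?case
  proof (cases s)
    case (Nm y)
    have idx: "index_of E y = index_of E' (transpose a b y)"
      using Cons.prems(1) Nm by simp
    have "db_name E y = db_name E' (transpose a b y)"
    proof (cases "index_of E y")
      case None
      then have "DFree y \<in> set (debruijn E (s # w))" using Nm by (simp add: db_name_def)
      then have "transpose a b y = y" using Cons.prems(2) by blast
      then show ?thesis using idx None by (simp add: db_name_def)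
    qed (use idx in \<open>simp add: db_name_def\<close>)
    then show ?thesis using Cons Nm by simp
  next
    case (Br z)
    have "\<forall>y\<in>names w. index_of (z # E) y = index_of (transpose a b z # E') (transpose a b y)"
      using Cons.prems(1) Br by (auto simp: transpose_eq_iff)
    then show ?thesis using Cons Br by simp
  qed
qed simp

lemma debruijn_rename:
  assumes "c \<notin> names w"
  shows "debruijn (a # E) w = debruijn (c # E) (sw a c w)"
proof (rule debruijn_rename_env)
  have "transpose a c y = y" if "y \<in> names w" "y \<noteq> a" for y
    using that assms by (metis transpose_apply_other)
  then show "\<forall>y\<in>names w. index_of (a # E) y = index_of (c # E) (transpose a c y)"
    using assms by fastforce
  show "\<forall>y. DFree y \<in> set (debruijn (a # E) w) \<longrightarrow> transpose a c y = y"
    using assms by (metis DFree_in_debruijn list.set_intros(1) transpose_apply_other)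
qed

fun shift_db :: "dbsym \<Rightarrow> dbsym" where
  "shift_db (DBound i) = DBound (Suc i)"
| "shift_db s = s"

lemma shift_db_neq_DBound_0 [simp]: "shift_db s \<noteq> DBound 0" "DBound 0 \<noteq> shift_db s"
  by (cases s; simp)+

lemma shift_db_inj: "shift_db s = shift_db s' \<Longrightarrow> s = s'"
  by (cases s; cases s') simp_all

lemma db_name_Cons: "db_name (z # E) y = (if y = z then DBound 0 else shift_db (db_name E y))"
  by (simp add: db_name_def split: option.split)

lemma db_name_Cons_transfer:
  assumes "\<forall>y y'. db_name E1 y = db_name E2 y' \<longrightarrow> db_name F1 y = db_name F2 y'"
  shows "\<forall>y y'. db_name (z # E1) y = db_name (z' # E2) y' \<longrightarrow> db_name (z # F1) y = db_name (z' # F2) y'"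
  using assms by (auto simp: db_name_Cons dest: shift_db_inj)

lemma debruijn_transfer:
  "\<forall>y y'. db_name E1 y = db_name E2 y' \<longrightarrow> db_name F1 y = db_name F2 y'
   \<Longrightarrow> debruijn E1 w = debruijn E2 w' \<Longrightarrow> debruijn F1 w = debruijn F2 w'"
proof (induct w arbitrary: w' E1 E2 F1 F2)
  case Nil then show ?case by (metis length_0_conv length_debruijn)
next
  case (Cons s w)
  from Cons.prems(2) obtain t v' where w': "w' = t # v'"
    by (metis length_Suc_conv length_debruijn)
  show ?case
  proof (cases s; cases t)
    fix z z' assume "s = Br z" "t = Br z'"
    then show ?thesis
      using Cons.hyps[OF db_name_Cons_transfer[OF Cons.prems(1)]] Cons.prems(2) w' by simp
  qed (use Cons w' in auto)
qed

lemma debruijn_eq_change_env: "debruijn E w = debruijn E w' \<Longrightarrow> debruijn F w = debruijn F w'"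
  by (erule debruijn_transfer[rotated]) (auto dest: db_name_inj)


section \<open>Alpha-equivalence\<close>

lemma alpha_refl: "alpha u u"
  by (simp add: alpha_def)

lemma alpha_trans: "alpha u v \<Longrightarrow> alpha v w \<Longrightarrow> alpha u w"
  unfolding alpha_def by (rule rtranclp_trans)

lemma alpha_sym: "alpha u v \<Longrightarrow> alpha v u"
  unfolding alpha_def by (rule sympD[OF symp_rtranclp]) (auto intro: sympI)

lemma alpha_stepI: "alpha_step u v \<Longrightarrow> alpha u v"
  by (auto simp: alpha_def)

lemma alpha_Br_rename: "c \<notin> names w \<Longrightarrow> alpha (u @ Br a # w) (u @ Br c # sw a c w)"
  by (rule alpha_stepI) (metis abstr_rename alpha_step_def fresh_word)

lemma alpha_step_debruijn: "alpha_step u v \<Longrightarrow> debruijn [] u = debruijn [] v"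
  by (auto simp: alpha_step_def abstr_eq_iff fresh_word debruijn_append debruijn_rename)

lemma alpha_imp_debruijn: "alpha u v \<Longrightarrow> debruijn [] u = debruijn [] v"
  unfolding alpha_def
  by (induct rule: rtranclp_induct) (auto dest: alpha_step_debruijn)

lemma debruijn_imp_alpha:
  "debruijn (binders [] u) w = debruijn (binders [] u) w' \<Longrightarrow> alpha (u @ w) (u @ w')"
proof (induction w arbitrary: u w' rule: length_induct)
  case (1 w)
  show ?case
  proof (cases w)
    case Nil
    with "1.prems" have "w' = []" by (metis length_0_conv length_debruijn)
    then show ?thesis using Nil by (simp add: alpha_refl)
  next
    case (Cons s v)
    from "1.prems" Cons obtain t v' where w': "w' = t # v'"
      by (metis length_Suc_conv length_debruijn)
    show ?thesis
    proof (cases s)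
      case (Nm y)
      with "1.prems" Cons w' have "t = Nm y"
        and "debruijn (binders [] (u @ [Nm y])) v = debruijn (binders [] (u @ [Nm y])) v'"
        by (cases t; auto simp: binders_append dest: db_name_inj)+
      then show ?thesis using "1.IH" Cons w' Nm by fastforce
    next
      case (Br a)
      with "1.prems" Cons w' obtain b where t: "t = Br b"
        and tl: "debruijn (a # binders [] u) v = debruijn (b # binders [] u) v'"
        by (cases t) auto
      obtain c where c: "c \<notin> names v \<union> names v'"
        using ex_not_in_finite[of "names v \<union> names v'"] by auto
      have "debruijn (binders [] (u @ [Br c])) (sw a c v) = debruijn (binders [] (u @ [Br c])) (sw b c v')"
        using tl c debruijn_rename[of c v a] debruijn_rename[of c v' b] by (simp add: binders_append)
      then have "alpha (u @ Br c # sw a c v) (u @ Br c # sw b c v')"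
        using "1.IH"[rule_format, of "sw a c v" "u @ [Br c]" "sw b c v'"] Cons by simp
      moreover have "alpha (u @ Br a # v) (u @ Br c # sw a c v)"
        "alpha (u @ Br b # v') (u @ Br c # sw b c v')"
        using c by (simp_all add: alpha_Br_rename)
      ultimately show ?thesis using Cons w' t Br by (meson alpha_sym alpha_trans)
    qed
  qed
qed

lemma alpha_iff_debruijn: "alpha u v \<longleftrightarrow> debruijn [] u = debruijn [] v"
  using alpha_imp_debruijn debruijn_imp_alpha[of "[]" u v] by (metis append_Nil binders.simps(1))

lemma mem_acls_iff: "v \<in> acls w \<longleftrightarrow> debruijn [] v = debruijn [] w"
  by (auto simp: acls_def alpha_iff_debruijn)

lemma acls_eq_iff: "acls u = acls v \<longleftrightarrow> debruijn [] u = debruijn [] v"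
  by (auto simp: acls_def alpha_iff_debruijn)

lemma acls_self: "w \<in> acls w"
  by (simp add: mem_acls_iff)

lemma acls_SOME [simp]: "acls (SOME v. v \<in> acls w) = acls w"
  by (metis acls_eq_iff acls_self mem_acls_iff someI)

lemma sw_acls: "sw a b (acls w) = acls (sw a b w)"
  using debruijn_sw[of a b "[]"]
  by (auto simp: set_eq_iff mem_sw_set_iff mem_acls_iff map_sw_db_eq_iff)

definition free_names :: "word \<Rightarrow> nat set" where
  "free_names w = {y. DFree y \<in> set (debruijn [] w)}"

lemma free_names_subset_names: "free_names w \<subseteq> names w"
  by (auto simp: free_names_def dest: DFree_in_debruijn)

lemma DFree_in_debruijn_singleton:
  "DFree y \<in> set (debruijn [b] w) \<longleftrightarrow> y \<noteq> b \<and> DFree y \<in> set (debruijn [] w)"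
proof (cases "y = b")
  case True then show ?thesis using DFree_in_debruijn by fastforce
next
  case False then show ?thesis using DFree_in_debruijn_cong[of y "[b]" "[]" w] by simp
qed

lemma free_names_simps:
  "free_names [] = {}" "free_names (Nm a # w) = insert a (free_names w)"
  "free_names (Br b # w) = free_names w - {b}"
  by (auto simp: free_names_def db_name_def DFree_in_debruijn_singleton)

lemma supp_acls: "supp (acls w) = free_names w"
proof
  show "supp (acls w) \<subseteq> free_names w"
  proof
    fix c assume c: "c \<in> supp (acls w)"
    have "sw c d (acls w) = acls w" if "c \<notin> free_names w" "d \<notin> free_names w" for d
    proof -
      have "map (sw_db c d) (debruijn [] w) = debruijn [] w"
        using that by (intro map_idI) (auto simp: sw_db_def free_names_def split: dbsym.split,
          metis transpose_apply_other)
      then show ?thesis by (simp add: sw_acls acls_eq_iff debruijn_sw[of c d "[]", simplified])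
    qed
    then have "c \<notin> free_names w \<Longrightarrow> {d. sw c d (acls w) \<noteq> acls w} \<subseteq> free_names w" by blast
    then show "c \<in> free_names w"
      using c free_names_subset_names finite_names unfolding supp_def
      by (metis finite_subset mem_Collect_eq)
  qed
  show "free_names w \<subseteq> supp (acls w)"
  proof
    fix c assume c: "c \<in> free_names w"
    have "sw c d (acls w) \<noteq> acls w" if "d \<notin> names w" for d
    proof -
      have "DFree d \<in> set (map (sw_db c d) (debruijn [] w))"
        using c by (force simp: free_names_def sw_db_def)
      moreover have "DFree d \<notin> set (debruijn [] w)"
        using that DFree_in_debruijn by blast
      ultimately show ?thesis
        by (metis sw_acls acls_eq_iff debruijn_sw[of c d "[]", simplified])
    qed
    then have "- names w \<subseteq> {d. sw c d (acls w) \<noteq> acls w}" by blast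
    moreover have "infinite (- names w)"
      using finite_names infinite_UNIV_nat by (metis finite_compl)
    ultimately show "c \<in> supp (acls w)"
      unfolding supp_def using finite_subset by blast
  qed
qed

lemma finite_supp_acls: "finite (supp (acls w))"
  using free_names_subset_names finite_names finite_subset by (metis supp_acls)

lemma fresh_acls: "fresh c (acls w) \<longleftrightarrow> c \<notin> free_names w"
  by (simp add: fresh_def supp_acls)

lemma acls_Br_rename:
  assumes "fresh c (acls w)"
  shows "acls (Br a # w) = acls (Br c # sw a c w)"
proof (cases "c = a")
  case False
  have "debruijn [a] w = debruijn [c] (sw a c w)"
  proof (rule debruijn_rename_env)
    show "\<forall>y\<in>names w. index_of [a] y = index_of [c] (transpose a c y)"
      using False by (auto simp: transpose_def)
    show "\<forall>y. DFree y \<in> set (debruijn [a] w) \<longrightarrow> transpose a c y = y"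
      using assms by (auto simp: fresh_acls free_names_def DFree_in_debruijn_singleton,
          metis transpose_apply_other)
  qed
  then show ?thesis by (simp add: acls_eq_iff)
qed simp

lemma acls_Nm_eq_iff: "acls (Nm a # v) = acls (Nm b # w) \<longleftrightarrow> a = b \<and> acls v = acls w"
  by (auto simp: acls_eq_iff dest: db_name_inj)

lemma acls_distinct [simp]:
  "acls [] \<noteq> acls (Nm a # v)" "acls [] \<noteq> acls (Br b # v)" "acls (Nm a # v) \<noteq> acls (Br b # w)"
  "acls (Nm a # v) \<noteq> acls []" "acls (Br b # v) \<noteq> acls []" "acls (Br b # w) \<noteq> acls (Nm a # v)"
  by (auto simp: acls_eq_iff)

lemma acls_Br_eq_iff: "acls (Br a # v) = acls (Br b # w) \<longleftrightarrow> abstr a (acls v) = abstr b (acls w)"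
proof -
  have cong: "acls (Br c # v) = acls (Br c # w) \<longleftrightarrow> acls v = acls w" for c v w
    by (auto simp: acls_eq_iff intro: debruijn_eq_change_env)
  obtain c where c: "c \<notin> names v \<union> names w"
    using ex_not_in_finite[of "names v \<union> names w"] by auto
  then have "fresh c (acls v)" "fresh c (acls w)"
    using free_names_subset_names by (auto simp: fresh_acls)
  then have "acls (Br a # v) = acls (Br c # sw a c v)" "acls (Br b # w) = acls (Br c # sw b c w)"
    "abstr a (acls v) = abstr c (acls (sw a c v))" "abstr b (acls w) = abstr c (acls (sw b c w))"
    by (simp_all add: acls_Br_rename abstr_rename sw_acls[symmetric])
  moreover have "abstr c x = abstr c y \<longleftrightarrow> x = y" for x y :: cls
    by (auto dest: abstr_inj)
  ultimately show ?thesis by (simp only: cong)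
qed


section \<open>The initial algebra\<close>

lemma acls_in_muF [simp]: "acls w \<in> muF"
  by (simp add: muF_def)

lemma muF_cases:
  assumes "u \<in> muF"
  obtains "u = acls []" | a v where "u = acls (Nm a # v)" | b v where "u = acls (Br b # v)"
proof -
  obtain w where "u = acls w" using assms by (auto simp: muF_def)
  then show ?thesis using that
  proof (cases w)
    case (Cons s v) then show ?thesis using that \<open>u = acls w\<close> by (cases s) auto
  qed auto
qed

lemma sw_muF: "S \<subseteq> muF \<Longrightarrow> sw a b S \<subseteq> muF"
proof
  fix x assume "S \<subseteq> muF" "x \<in> sw a b S"
  then obtain w where "sw a b x = acls w" by (auto simp: muF_def mem_sw_set_iff)
  then have "x = acls (sw a b w)" by (metis sw_acls sw_sw)
  then show "x \<in> muF" by simp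
qed

lemma muF_set_eqI: "A \<subseteq> muF \<Longrightarrow> B \<subseteq> muF \<Longrightarrow> (\<And>w. acls w \<in> A \<longleftrightarrow> acls w \<in> B) \<Longrightarrow> A = B"
  by (auto simp: muF_def)

lemma iota_Inl [simp]: "iota (Inl ()) = acls []"
  by (simp add: iota_def)

lemma iota_Nm [simp]: "iota (Inr (Inl (a, acls v))) = acls (Nm a # v)"
  by (simp add: iota_def acls_Nm_eq_iff)

lemma iota_Br [simp]: "iota (Inr (Inr (abstr b (acls v)))) = acls (Br b # v)"
proof -
  obtain a x where p: "(SOME p. p \<in> abstr b (acls v)) = (a, x)" by (rule prod.exhaust)
  have "(SOME p. p \<in> abstr b (acls v)) \<in> abstr b (acls v)" by (rule someI, rule abstr_mem_self)
  then have ax: "(a, x) \<in> abstr b (acls v)" by (simp only: p)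
  then obtain v' where x: "x = acls v'"
    by (auto simp: abstr_mem_iff sw_acls)
  have "acls (Br a # v') = acls (Br b # v)"
    using abstr_mem_abstr[OF ax] by (simp add: x acls_Br_eq_iff)
  then show ?thesis by (simp add: iota_def p x acls_Br_eq_iff)
qed

lemma FmuF_cases:
  assumes "z \<in> FmuF"
  obtains "z = Inl ()" | a v where "z = Inr (Inl (a, acls v))" | b v where "z = Inr (Inr (abstr b (acls v)))"
  using assms unfolding FmuF_def muF_def by blast

lemma inj_on_iota: "inj_on iota FmuF"
proof
  fix z z' assume "z \<in> FmuF" "z' \<in> FmuF" "iota z = iota z'"
  then show "z = z'"
    by (cases rule: FmuF_cases[OF \<open>z \<in> FmuF\<close>]; cases rule: FmuF_cases[OF \<open>z' \<in> FmuF\<close>])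
      (simp_all add: acls_Nm_eq_iff acls_Br_eq_iff)
qed

lemma iota_inv_iota: "z \<in> FmuF \<Longrightarrow> iota_inv (iota z) = z"
  by (simp add: iota_inv_def inj_on_iota)

lemma iota_inv_simps:
  "iota_inv (acls []) = Inl ()"
  "iota_inv (acls (Nm a # v)) = Inr (Inl (a, acls v))"
  "iota_inv (acls (Br b # v)) = Inr (Inr (abstr b (acls v)))"
  using iota_inv_iota[of "Inl ()"] iota_inv_iota[of "Inr (Inl (a, acls v))"]
    iota_inv_iota[of "Inr (Inr (abstr b (acls v)))"]
  by (auto simp: FmuF_def intro: acls_in_muF)


section \<open>Derivatives and the terminal coalgebra\<close>

definition Nm_deriv :: "nat \<Rightarrow> cls set \<Rightarrow> cls set" where
  "Nm_deriv a T = {acls w | w. acls (Nm a # w) \<in> T}"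

definition Br_deriv :: "nat \<Rightarrow> cls set \<Rightarrow> cls set" where
  "Br_deriv c T = {acls w | w. acls (Br c # w) \<in> T}"

lemma mem_Nm_deriv_iff: "acls w \<in> Nm_deriv a T \<longleftrightarrow> acls (Nm a # w) \<in> T"
  by (auto simp: Nm_deriv_def) (metis acls_Nm_eq_iff)

lemma mem_Br_deriv_iff: "acls w \<in> Br_deriv c T \<longleftrightarrow> acls (Br c # w) \<in> T"
  by (auto simp: Br_deriv_def) (metis acls_Br_eq_iff)

lemma sw_Br_deriv: "sw a b (Br_deriv c T) = Br_deriv (transpose a b c) (sw a b T)"
proof (rule muF_set_eqI)
  show "sw a b (Br_deriv c T) \<subseteq> muF" "Br_deriv (transpose a b c) (sw a b T) \<subseteq> muF"
    by (auto simp: Br_deriv_def intro!: sw_muF)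
  show "acls w \<in> sw a b (Br_deriv c T) \<longleftrightarrow> acls w \<in> Br_deriv (transpose a b c) (sw a b T)" for w
    by (simp add: mem_sw_set_iff sw_acls mem_Br_deriv_iff)
qed

lemma supp_Br_deriv: "supp (Br_deriv c T) \<subseteq> insert c (supp T)"
proof -
  have "supp (Br_deriv c T) \<subseteq> supp c \<union> supp T"
    by (rule supp_subset_Un_if_fixes) (simp add: sw_Br_deriv)
  then show ?thesis using supp_nat[of c] by auto
qed

lemma tau_fresh:
  assumes "finite (supp T)" and "fresh c T"
  shows "tau T = (acls [] \<in> T, \<lambda>a. Nm_deriv a T, abstr c (Br_deriv c T))"
proof -
  define c0 where "c0 = (SOME c. fresh c T)"
  have "fresh c0 T" unfolding c0_def using assms(1) by (rule fresh_SOME)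
  have "abstr c0 (Br_deriv c0 T) = abstr c (Br_deriv c T)"
  proof (cases "c0 = c")
    case False
    have "sw c0 c (Br_deriv c0 T) = Br_deriv c T"
      using sw_fresh_fresh[OF \<open>fresh c0 T\<close> assms(2)] by (simp add: sw_Br_deriv)
    moreover have "fresh c (Br_deriv c0 T)"
      using supp_Br_deriv[of c0 T] assms(2) False by (auto simp: fresh_def)
    ultimately show ?thesis by (metis abstr_rename)
  qed simp
  then show ?thesis
    by (simp add: tau_def Let_def Nm_deriv_def Br_deriv_def c0_def)
qed

lemma finite_supp_Pufs: "S \<in> Pufs \<Longrightarrow> finite (supp S)"
  unfolding Pufs_def using supp_set_subset_Union finite_subset by blast

lemma Pufs_subset_Pfs: "Pufs \<subseteq> Pfs"
  by (auto simp: Pfs_def Pufs_def finite_supp_Pufs)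

lemma Nm_deriv_in_Pufs: "S \<in> Pufs \<Longrightarrow> Nm_deriv a S \<in> Pufs"
proof -
  assume S: "S \<in> Pufs"
  have "\<Union>(supp ` Nm_deriv a S) \<subseteq> \<Union>(supp ` S)"
    by (force simp: Nm_deriv_def supp_acls free_names_simps)
  then show ?thesis using S by (auto simp: Pufs_def Nm_deriv_def intro: finite_subset)
qed

lemma Br_deriv_in_Pufs: "S \<in> Pufs \<Longrightarrow> Br_deriv c S \<in> Pufs"
proof -
  assume S: "S \<in> Pufs"
  have "\<Union>(supp ` Br_deriv c S) \<subseteq> insert c (\<Union>(supp ` S))"
    by (force simp: Br_deriv_def supp_acls free_names_simps)
  then show ?thesis using S by (auto simp: Pufs_def Br_deriv_def intro: finite_subset)
qed


section \<open>The coalgebra on uniformly finitely supported sets\<close>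

lemma eps_Inl: "eps {Inl () :: unit + (nat \<times> 'x::swap_action) + (nat \<times> 'x) set} = (True, \<lambda>_. {}, abstr 0 {})"
  by (simp add: eps_def Let_def abstr_empty)

lemma eps_Nm:
  "eps {Inr (Inl (a, x)) :: unit + (nat \<times> 'x::swap_action) + (nat \<times> 'x) set}
   = (False, (\<lambda>_. {})(a := {x}), abstr 0 {})"
  by (simp add: eps_def Let_def fun_eq_iff abstr_empty)

lemma eps_Br:
  assumes "finite (supp x)"
  shows "eps {Inr (Inr (abstr b x)) :: unit + (nat \<times> 'x::swap_action) + (nat \<times> 'x) set}
    = (False, \<lambda>_. {}, abstr b {x})"
proof -
  define z where "z = (Inr (Inr (abstr b x)) :: unit + (nat \<times> 'x) + (nat \<times> 'x) set)"
  define c where "c = (SOME c. fresh c {z})"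
  have "supp {z} = supp (abstr b x)"
    by (auto simp: z_def supp_def sw_sum_def)
  then have "fresh c (abstr b x)"
    using fresh_SOME[of "{z}"] supp_abstr[of b x] assms finite_subset
    unfolding c_def fresh_def by (metis finite_insert)
  then have "abstr c (sw b c x) = abstr b x"
    using abstr_rename by (metis fresh_abstr sw_same)
  then have "{y. abstr c y = abstr b x} = {sw b c x}" "abstr c {sw b c x} = abstr b {x}"
    by (auto simp: abstr_singleton_eq_iff) (metis abstr_inj)
  then show ?thesis
    by (simp add: eps_def Let_def c_def[symmetric] z_def[symmetric]) (auto simp: z_def)
qed

definition coalg_gen :: "cls \<Rightarrow> bool \<times> (nat \<Rightarrow> cls set) \<times> (nat \<times> cls set) set" where
  "coalg_gen u = eps {iota_inv u}"

lemma coalg_eq_sharp: "coalg = sharp coalg_gen"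
  by (simp add: coalg_def coalg_gen_def[abs_def])

lemma coalg_gen_simps:
  "coalg_gen (acls []) = (True, \<lambda>_. {}, abstr 0 {})"
  "coalg_gen (acls (Nm a # v)) = (False, (\<lambda>_. {})(a := {acls v}), abstr 0 {})"
  "coalg_gen (acls (Br b # v)) = (False, \<lambda>_. {}, abstr b {acls v})"
  by (simp_all add: coalg_gen_def iota_inv_simps eps_Inl eps_Nm eps_Br finite_supp_acls)

lemma sw_const_empty [simp]: "sw a b (\<lambda>_::nat. {}::'a::swap_action set) = (\<lambda>_. {})"
  by (simp add: sw_fun_def)

lemma sw_fun_upd_empty:
  "sw a b ((\<lambda>_::nat. {}::'a::swap_action set)(c := X)) = (\<lambda>_. {})(transpose a b c := sw a b X)"
  by (auto simp: sw_fun_def fun_eq_iff transpose_eq_iff)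

lemma sw_coalg_gen: "u \<in> muF \<Longrightarrow> coalg_gen (sw a b u) = sw a b (coalg_gen u)"
  by (erule muF_cases)
    (simp_all add: sw_acls coalg_gen_simps sw_fun_upd_empty sw_abstr abstr_empty[of "transpose a b 0" 0])

lemma fun_upd_empty_eq_iff:
  "(\<lambda>_. {})(a := {x}) = (\<lambda>_. {})(b := {y}) \<longleftrightarrow> a = b \<and> x = y"
  "(\<lambda>_. {})(a := {x}) \<noteq> (\<lambda>_. {})" "(\<lambda>_. {}) \<noteq> (\<lambda>_. {})(a := {x})"
  by (auto simp: fun_eq_iff)

lemma inj_on_coalg_gen: "inj_on coalg_gen muF"
proof
  fix u u' assume "u \<in> muF" "u' \<in> muF" "coalg_gen u = coalg_gen u'"
  then show "u = u'"
    by (cases rule: muF_cases[OF \<open>u \<in> muF\<close>]; cases rule: muF_cases[OF \<open>u' \<in> muF\<close>])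
      (simp_all add: coalg_gen_simps fun_upd_empty_eq_iff abstr_singleton_eq_iff acls_Nm_eq_iff
        acls_Br_eq_iff)
qed

lemma supp_image_inj_eqvt:
  assumes closed: "\<And>a b x. x \<in> A \<Longrightarrow> sw a b x \<in> A"
    and eqvt: "\<And>a b x. x \<in> A \<Longrightarrow> f (sw a b x) = sw a b (f x)"
    and inj: "inj_on f A" and "S \<subseteq> A"
  shows "supp (f ` S) = supp (S::'a::swap_action set)"
proof -
  have "sw a b S \<subseteq> A" for a b
  proof
    fix x assume "x \<in> sw a b S"
    then have "sw a b x \<in> A" using \<open>S \<subseteq> A\<close> by (auto simp: mem_sw_set_iff)
    then show "x \<in> A" using closed[of "sw a b x" a b] by simp
  qed
  moreover have "sw a b (f ` S) = f ` sw a b S" for a b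
  proof -
    have "sw a b (f ` S) = (\<lambda>x. sw a b (f x)) ` S" by (simp add: sw_set_def image_image)
    also have "\<dots> = (\<lambda>x. f (sw a b x)) ` S"
      using \<open>S \<subseteq> A\<close> eqvt by (intro image_cong) auto
    finally show ?thesis by (simp add: sw_set_def image_image)
  qed
  ultimately have "sw a b (f ` S) = f ` S \<longleftrightarrow> sw a b S = S" for a b
    using inj_on_image_eq_iff[OF inj _ \<open>S \<subseteq> A\<close>] by metis
  then show ?thesis by (simp add: supp_def)
qed

lemma supp_coalg_gen_image: "S \<subseteq> muF \<Longrightarrow> supp (coalg_gen ` S) = supp S"
  by (rule supp_image_inj_eqvt[OF _ sw_coalg_gen inj_on_coalg_gen])
    (auto simp: muF_def sw_acls)

lemma sw_Union: "sw a b (\<Union>X) = \<Union>(sw a b X :: 'a::swap_action set set)"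
  by (simp add: sw_set_def image_Union)

lemma sharp_eq:
  fixes g :: "'x \<Rightarrow> bool \<times> (nat \<Rightarrow> 'y::swap_action set) \<times> (nat \<times> 'y set) set"
  assumes "c = (SOME c. fresh c (g ` U))"
  shows "sharp g U = (True \<in> fst ` g ` U, \<lambda>a. \<Union>u\<in>U. fst (snd (g u)) a,
     abstr c (\<Union>{s. abstr c s \<in> (\<lambda>u. snd (snd (g u))) ` U}))"
proof -
  have "absmap Union (abstr c X) = abstr c (\<Union>X)" for X :: "'y set set"
    by (rule absmap_abstr) (simp add: sw_Union)
  then show ?thesis
    using assms by (simp add: sharp_def rho_def Gmu_def Let_def image_image) (auto simp: image_iff)
qed

lemma fst_coalg_gen: "u \<in> muF \<Longrightarrow> fst (coalg_gen u) \<longleftrightarrow> u = acls []"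
  by (erule muF_cases) (simp_all add: coalg_gen_simps)

lemma mem_fst_snd_coalg_gen:
  "u \<in> muF \<Longrightarrow> x \<in> fst (snd (coalg_gen u)) a \<longleftrightarrow> (\<exists>w. x = acls w \<and> u = acls (Nm a # w))"
  by (erule muF_cases) (auto simp: coalg_gen_simps acls_Nm_eq_iff)

lemma snd_snd_coalg_gen_eq_abstrD:
  assumes "u \<in> muF" "snd (snd (coalg_gen u)) = abstr c s" "x \<in> s"
  shows "\<exists>w. x = acls w \<and> u = acls (Br c # w)"
  using assms(1)
proof (cases rule: muF_cases)
  case (3 b v)
  then have eq: "abstr b {acls v} = abstr c s" using assms(2) by (simp add: coalg_gen_simps)
  then obtain w where s: "s = {acls w}" by (auto simp: abstr_eq_iff sw_acls)
  then have "u = acls (Br c # w)"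
    using eq 3 by (simp add: abstr_singleton_eq_iff acls_Br_eq_iff)
  then show ?thesis using assms(3) s by blast
qed (use assms in \<open>auto simp: coalg_gen_simps abstr_eq_iff\<close>)

lemma coalg_eq_tau:
  assumes "S \<in> Pufs"
  shows "coalg S = tau S"
proof -
  have S: "S \<subseteq> muF" using assms by (simp add: Pufs_def)
  define c where "c = (SOME c. fresh c (coalg_gen ` S))"
  \<comment> \<open>rho chooses its fresh name for \<open>coalg_gen ` S\<close>, which has the same support as S\<close>
  have "fresh c S"
    using fresh_SOME[of "coalg_gen ` S"] finite_supp_Pufs[OF assms]
    by (simp add: c_def fresh_def supp_coalg_gen_image[OF S])
  have fst: "True \<in> fst ` coalg_gen ` S \<longleftrightarrow> acls [] \<in> S"
    using S fst_coalg_gen by (auto simp: image_iff)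
  have snd: "(\<Union>u\<in>S. fst (snd (coalg_gen u)) a) = Nm_deriv a S" for a
    using S by (auto simp: mem_fst_snd_coalg_gen Nm_deriv_def subset_iff, blast)
  have thd: "\<Union>{s. abstr c s \<in> (\<lambda>u. snd (snd (coalg_gen u))) ` S} = Br_deriv c S"
  proof (intro equalityI subsetI)
    fix x assume "x \<in> \<Union>{s. abstr c s \<in> (\<lambda>u. snd (snd (coalg_gen u))) ` S}"
    then obtain s u where "x \<in> s" "u \<in> S" "snd (snd (coalg_gen u)) = abstr c s" by force
    then show "x \<in> Br_deriv c S"
      using S snd_snd_coalg_gen_eq_abstrD by (fastforce simp: Br_deriv_def)
  next
    fix x assume "x \<in> Br_deriv c S"
    then obtain w where "x = acls w" "acls (Br c # w) \<in> S" by (auto simp: Br_deriv_def)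
    then show "x \<in> \<Union>{s. abstr c s \<in> (\<lambda>u. snd (snd (coalg_gen u))) ` S}"
      by (force simp: coalg_gen_simps)
  qed
  show ?thesis
    using sharp_eq[OF c_def] tau_fresh[OF finite_supp_Pufs[OF assms] \<open>fresh c S\<close>] fst snd thd
    by (simp add: coalg_eq_sharp)
qed


section \<open>Homomorphisms into the terminal coalgebra\<close>

lemma Gmap_tau:
  fixes e :: "cls set \<Rightarrow> cls set"
  assumes "S \<in> Pufs" "fresh c S"
    and eqvt: "\<And>a b T. T \<in> Pufs \<Longrightarrow> e (sw a b T) = sw a b (e T)"
  shows "Gmap e (tau S) = (acls [] \<in> S, \<lambda>a. e (Nm_deriv a S), abstr c (e (Br_deriv c S)))"
proof -
  have "absmap e (abstr c (Br_deriv c S)) = abstr c (e (Br_deriv c S))"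
    by (rule absmap_abstr) (simp add: eqvt Br_deriv_in_Pufs assms(1))
  then show ?thesis
    by (simp add: Gmap_def tau_fresh[OF finite_supp_Pufs[OF assms(1)] assms(2)] comp_def)
qed

lemma is_hom_id: "is_hom (\<lambda>S. S)"
proof -
  have "tau S = Gmap (\<lambda>S. S) (tau S)" if S: "S \<in> Pufs" for S
  proof -
    have c: "fresh (SOME c. fresh c S) S" by (rule fresh_SOME[OF finite_supp_Pufs[OF S]])
    show ?thesis using Gmap_tau[OF S c] tau_fresh[OF finite_supp_Pufs[OF S] c] by simp
  qed
  then show ?thesis
    using Pufs_subset_Pfs by (auto simp: is_hom_def coalg_eq_tau)
qed

lemma is_hom_derivs:
  assumes "is_hom e" "S \<in> Pufs" "fresh c S"
  shows "acls [] \<in> e S \<longleftrightarrow> acls [] \<in> S"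
    and "Nm_deriv a (e S) = e (Nm_deriv a S)"
    and "Br_deriv c (e S) = e (Br_deriv c S)"
proof -
  have eqvt: "\<And>a b T. T \<in> Pufs \<Longrightarrow> e (sw a b T) = sw a b (e T)"
    and "e S \<in> Pfs" and hom: "tau (e S) = Gmap e (tau S)"
    using assms(1,2) by (simp_all add: is_hom_def coalg_eq_tau)
  have "supp (e S) \<subseteq> supp S"
    by (rule supp_subset_if_fixes) (metis eqvt assms(2))
  then have "fresh c (e S)" using assms(3) by (auto simp: fresh_def)
  then have "tau (e S) = (acls [] \<in> e S, \<lambda>a. Nm_deriv a (e S), abstr c (Br_deriv c (e S)))"
    using \<open>e S \<in> Pfs\<close> by (simp add: Pfs_def tau_fresh)
  then show "acls [] \<in> e S \<longleftrightarrow> acls [] \<in> S" "Nm_deriv a (e S) = e (Nm_deriv a S)"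
    "Br_deriv c (e S) = e (Br_deriv c S)"
    using hom Gmap_tau[OF assms(2,3) eqvt] by (auto simp: fun_eq_iff dest: abstr_inj)
qed

lemma is_hom_mem_iff:
  assumes "is_hom e" "S \<in> Pufs"
  shows "acls w \<in> e S \<longleftrightarrow> acls w \<in> S"
  using assms(2)
proof (induction w arbitrary: S rule: length_induct)
  case (1 w)
  show ?case
  proof (cases w)
    case Nil
    then show ?thesis using is_hom_derivs(1)[OF assms(1) "1.prems" fresh_SOME] "1.prems"
      by (simp add: finite_supp_Pufs)
  next
    case (Cons s v)
    obtain c where c: "c \<notin> supp S \<union> names v"
      using ex_not_in_finite[of "supp S \<union> names v"] finite_supp_Pufs[OF "1.prems"] by auto
    then have "fresh c S" by (simp add: fresh_def)
    show ?thesis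
    proof (cases s)
      case (Nm a)
      have "acls v \<in> e (Nm_deriv a S) \<longleftrightarrow> acls v \<in> Nm_deriv a S"
        using "1.IH" Cons Nm_deriv_in_Pufs[OF "1.prems"] by simp
      then show ?thesis
        using is_hom_derivs(2)[OF assms(1) "1.prems" \<open>fresh c S\<close>] Cons Nm
        by (simp add: mem_Nm_deriv_iff[symmetric])
    next
      case (Br b)
      have "fresh c (acls v)"
        using c free_names_subset_names by (auto simp: fresh_acls)
      then have w: "acls w = acls (Br c # sw b c v)" using Cons Br by (simp add: acls_Br_rename)
      have "acls (sw b c v) \<in> e (Br_deriv c S) \<longleftrightarrow> acls (sw b c v) \<in> Br_deriv c S"
        using "1.IH" Cons Br_deriv_in_Pufs[OF "1.prems"] by simp
      then show ?thesis
        using is_hom_derivs(3)[OF assms(1) "1.prems" \<open>fresh c S\<close>] w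
        by (simp add: mem_Br_deriv_iff[symmetric])
    qed
  qed
qed

theorem lemma4p21:
  shows "is_hom (\<lambda>S. S) \<and> (\<forall>e. is_hom e \<longrightarrow> (\<forall>S\<in>Pufs. e S = S))"
proof (intro conjI allI impI ballI)
  show "is_hom (\<lambda>S. S)" by (rule is_hom_id)
next
  fix e S assume "is_hom e" "S \<in> Pufs"
  then show "e S = S"
    by (intro muF_set_eqI is_hom_mem_iff) (auto simp: is_hom_def Pfs_def Pufs_def)
qed

end
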